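(* There is an absolute constant $c>0$ such that for all positive integers $f,l$ there exist integers $(M_C)_C$ such that the hypercube Hamiltonian $H=\sum_C\bigl(\sum_{i\in C}S_i-M_C\bigr)^2$ on $N=l^f$ variables has at least $2^N\bigl(\frac{c}{f\sqrt l}\bigr)^{n_C}$ global minima, all of which are $(2^f-1)$-minima.
   Context: Fix positive integers $f,l$ and let $N=l^f$. The variables $S_i\in\{-1,+1\}$ are indexed by vectors $i=(x_1,\dots,x_f)$ with $x_a\in\{1,\dots,l\}$. A column $C$ is specified by an index $b\in\{1,\dots,f\}$ and integers $y_a\in\{1,\dots,l\}$ for all $a\neq b$; a variable $(x_1,\dots,x_f)$ lies in $C$ iff $x_a=y_a$ for all $a\neq b$. The number of columns is $n_C=f\,l^{f-1}$. Given an integer $M_C$ for each column, $H(S)=\sum_C\bigl(\sum_{i\in C}S_i-M_C\bigr)^2$. A global minimum is an assignment minimizing $H$. For an integer $k\geq1$, an assignment $A$ is a $k$-minimum of $H$ if every assignment differing from $A$ in at least one and at most $k$ variables has a strictly larger value of $H$ than $A$. *)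

theory Defs
  imports Complex_Main "HOL-Library.FuncSet"
begin

definition Vars :: "nat \<Rightarrow> nat \<Rightarrow> (nat \<Rightarrow> nat) set" where
  "Vars f l = PiE {1..f} (\<lambda>_. {1..l})"

text \<open>A column is a pair (b, y) with b in {1..f} and y giving y_a in {1..l} for a ~= b.\<close>
definition Cols :: "nat \<Rightarrow> nat \<Rightarrow> (nat \<times> (nat \<Rightarrow> nat)) set" where
  "Cols f l = Sigma {1..f} (\<lambda>b. PiE ({1..f} - {b}) (\<lambda>_. {1..l}))"

definition col :: "nat \<Rightarrow> nat \<Rightarrow> nat \<times> (nat \<Rightarrow> nat) \<Rightarrow> (nat \<Rightarrow> nat) set" where
  "col f l C = {x \<in> Vars f l. \<forall>a \<in> {1..f} - {fst C}. x a = snd C a}"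

definition Assigns :: "nat \<Rightarrow> nat \<Rightarrow> ((nat \<Rightarrow> nat) \<Rightarrow> int) set" where
  "Assigns f l = PiE (Vars f l) (\<lambda>_. {-1, 1})"

definition Ham :: "nat \<Rightarrow> nat \<Rightarrow> (nat \<times> (nat \<Rightarrow> nat) \<Rightarrow> int) \<Rightarrow> ((nat \<Rightarrow> nat) \<Rightarrow> int) \<Rightarrow> int" where
  "Ham f l M S = (\<Sum>C \<in> Cols f l. ((\<Sum>i \<in> col f l C. S i) - M C)^2)"

definition global_min :: "nat \<Rightarrow> nat \<Rightarrow> (nat \<times> (nat \<Rightarrow> nat) \<Rightarrow> int) \<Rightarrow> ((nat \<Rightarrow> nat) \<Rightarrow> int) \<Rightarrow> bool" where
  "global_min f l M S \<longleftrightarrow> S \<in> Assigns f l \<and> (\<forall>T \<in> Assigns f l. Ham f l M S \<le> Ham f l M T)"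

definition k_min :: "nat \<Rightarrow> nat \<Rightarrow> (nat \<times> (nat \<Rightarrow> nat) \<Rightarrow> int) \<Rightarrow> nat \<Rightarrow> ((nat \<Rightarrow> nat) \<Rightarrow> int) \<Rightarrow> bool" where
  "k_min f l M k S \<longleftrightarrow> S \<in> Assigns f l \<and>
     (\<forall>T \<in> Assigns f l. 1 \<le> card {i \<in> Vars f l. T i \<noteq> S i} \<and> card {i \<in> Vars f l. T i \<noteq> S i} \<le> k
        \<longrightarrow> Ham f l M S < Ham f l M T)"

end

theory Submission
  imports Defs
begin

text \<open>Take \<open>M\<close> to be the column sums of a suitable assignment \<open>S0\<close>: then \<open>H\<close> vanishes
  exactly on the fibre of \<open>S0\<close>, the assignments with the same column sums, so these are the
  global minima. Two distinct assignments in one fibre differ by a function with vanishing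
  sums along every axis-parallel line, whose support has at least \<open>2 ^ f\<close> points; hence every
  global minimum is a \<open>(2 ^ f - 1)\<close>-minimum. Some fibre is large by a weighted pigeonhole
  argument: weight a vector \<open>v\<close> of column sums by \<open>\<Prod>C. exp (- v C ^ 2 / l)\<close>. By Jensen and
  \<open>E (\<Sum>i\<in>C. S i)\<^sup>2 = card C \<le> l\<close> the assignments have total weight at least
  \<open>2 ^ N * exp (- n_C)\<close>, whereas all possible vectors together weigh at most
  \<open>(12 * sqrt l) ^ n_C\<close>.\<close>

definition axis_line :: "'a \<Rightarrow> ('a \<Rightarrow> 'b) \<Rightarrow> ('a \<Rightarrow> 'b) set" where
  "axis_line a x = {y. \<forall>b. b \<noteq> a \<longrightarrow> y b = x b}"

text \<open>Slice the support by the value of the coordinate \<open>a\<close>: the vanishing sum along the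
  line through a support point forces a second, nonempty slice, and each slice again has
  vanishing line sums in the remaining directions.\<close>
lemma card_support_ge_two_pow:
  fixes d :: "('a \<Rightarrow> 'b) \<Rightarrow> 'c::comm_monoid_add"
  assumes "finite I" "finite {x. d x \<noteq> 0}" "{x. d x \<noteq> 0} \<noteq> {}"
    and "\<And>a x. a \<in> I \<Longrightarrow> d x \<noteq> 0 \<Longrightarrow> (\<Sum>y \<in> {y \<in> axis_line a x. d y \<noteq> 0}. d y) = 0"
  shows "2 ^ card I \<le> card {x. d x \<noteq> 0}"
  using assms
proof (induction I arbitrary: d rule: finite_induct)
  case empty
  then show ?case by (simp add: Suc_leI card_gt_0_iff)
next
  case (insert a J d)
  let ?D = "{x. d x \<noteq> 0}"
  define slice where "slice t = {x \<in> ?D. x a = t}" for t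
  have slice_bound: "2 ^ card J \<le> card (slice (x a))" if "d x \<noteq> 0" for x
  proof -
    define dt where "dt y = (if y a = x a then d y else 0)" for y
    have supp: "{y. dt y \<noteq> 0} = slice (x a)" by (auto simp: dt_def slice_def)
    have "2 ^ card J \<le> card {y. dt y \<noteq> 0}"
    proof (rule insert.IH)
      show "finite {y. dt y \<noteq> 0}" "{y. dt y \<noteq> 0} \<noteq> {}"
        unfolding supp slice_def using insert.prems(1) that by auto
    next
      fix b z assume b: "b \<in> J" and z: "dt z \<noteq> 0"
      have "b \<noteq> a" using b insert.hyps(2) by auto
      moreover have za: "z a = x a" "d z \<noteq> 0" using z by (auto simp: dt_def split: if_splits)
      ultimately have "y \<in> axis_line b z \<Longrightarrow> dt y = d y" for y
        by (auto simp: dt_def axis_line_def)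
      then have "(\<Sum>y \<in> {y \<in> axis_line b z. dt y \<noteq> 0}. dt y) = (\<Sum>y \<in> {y \<in> axis_line b z. d y \<noteq> 0}. d y)"
        by (intro sum.cong) auto
      then show "(\<Sum>y \<in> {y \<in> axis_line b z. dt y \<noteq> 0}. dt y) = 0"
        using insert.prems(3)[of b z] b za by simp
    qed
    then show ?thesis by (simp only: supp)
  qed
  obtain x where x: "d x \<noteq> 0" using insert.prems(2) by auto
  define L where "L = {y \<in> axis_line a x. d y \<noteq> 0}"
  have "x \<in> L" using x by (simp add: L_def axis_line_def)
  moreover have "L \<noteq> {x}"
    using insert.prems(3)[of a x] x by (auto simp: L_def)
  ultimately obtain y where y: "y \<in> L" "y \<noteq> x" by blast
  have "y a \<noteq> x a"
    using y by (auto simp: L_def axis_line_def)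
  then have "card (slice (x a) \<union> slice (y a)) = card (slice (x a)) + card (slice (y a))"
    using insert.prems(1) by (intro card_Un_disjoint) (auto simp: slice_def)
  moreover have "card (slice (x a) \<union> slice (y a)) \<le> card ?D"
    using insert.prems(1) by (intro card_mono) (auto simp: slice_def)
  moreover have "d y \<noteq> 0" using y by (simp add: L_def)
  ultimately show ?case
    using slice_bound[of x] slice_bound[of y] x insert.hyps by simp
qed

lemma sum_PiE_signs_mult_eq_0:
  assumes "i \<in> V" "j \<in> V" "i \<noteq> j"
  shows "(\<Sum>S \<in> PiE V (\<lambda>_. {-1, 1::int}). S i * S j) = 0"
proof -
  let ?A = "PiE V (\<lambda>_. {-1, 1::int})"
  have flip: "S(i := - S i) \<in> ?A" if "S \<in> ?A" for S
    using that assms(1) by (auto simp: PiE_def Pi_def extensional_def)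
  have "(\<Sum>S \<in> ?A. S i * S j) = (\<Sum>S \<in> ?A. (S(i := - S i)) i * (S(i := - S i)) j)"
    by (rule sum.reindex_bij_witness[of _ "\<lambda>S. S(i := - S i)" "\<lambda>S. S(i := - S i)"])
       (auto simp: flip)
  also have "\<dots> = - (\<Sum>S \<in> ?A. S i * S j)"
    using assms(3) by (simp add: sum_negf)
  finally show ?thesis by simp
qed

lemma sum_PiE_signs_square_sum:
  assumes "c \<subseteq> V" "finite c"
  shows "(\<Sum>S \<in> PiE V (\<lambda>_. {-1, 1::int}). (\<Sum>i \<in> c. S i)\<^sup>2)
    = int (card (PiE V (\<lambda>_. {-1, 1::int})) * card c)"
proof -
  let ?A = "PiE V (\<lambda>_. {-1, 1::int})"
  have diag: "(\<Sum>S \<in> ?A. S i * S j) = (if i = j then int (card ?A) else 0)"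
    if "i \<in> c" "j \<in> c" for i j
  proof -
    have "S i * S i = 1" if "S \<in> ?A" for S
      using that \<open>i \<in> c\<close> assms(1) by (auto simp: PiE_def Pi_def)
    then show ?thesis
      using sum_PiE_signs_mult_eq_0[of i V j] that assms(1) by auto
  qed
  have "(\<Sum>S \<in> ?A. (\<Sum>i \<in> c. S i)\<^sup>2) = (\<Sum>i \<in> c. \<Sum>j \<in> c. \<Sum>S \<in> ?A. S i * S j)"
    by (simp add: power2_eq_square sum_product sum.swap[of _ ?A])
  also have "\<dots> = int (card ?A * card c)"
    using assms(2) by (simp add: diag)
  finally show ?thesis .
qed

text \<open>Jensen's inequality for \<open>exp\<close>, via the tangent line at \<open>c\<close>.\<close>
lemma card_mult_exp_le_sum_exp:
  fixes Y :: "'a \<Rightarrow> real"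
  assumes "finite A" "real (card A) * c \<le> (\<Sum>x \<in> A. Y x)"
  shows "real (card A) * exp c \<le> (\<Sum>x \<in> A. exp (Y x))"
proof -
  have tangent: "exp c * (1 + (Y x - c)) \<le> exp (Y x)" for x
    using exp_ge_add_one_self[of "Y x - c"] by (simp add: exp_diff le_divide_eq mult.commute)
  have "real (card A) * exp c \<le> exp c * (\<Sum>x \<in> A. 1 + (Y x - c))"
    using assms by (simp add: sum.distrib sum_subtractf algebra_simps)
  also have "\<dots> \<le> (\<Sum>x \<in> A. exp (Y x))"
    by (simp add: sum_distrib_left sum_mono tangent)
  finally show ?thesis .
qed

lemma weighted_pigeonhole:
  fixes w :: "'b \<Rightarrow> real"
  assumes "finite A" "A \<noteq> {}" "finite B" "g ` A \<subseteq> B" "\<And>v. v \<in> B \<Longrightarrow> 0 \<le> w v"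
  shows "\<exists>x0 \<in> A. (\<Sum>x \<in> A. w (g x)) \<le> real (card {x \<in> A. g x = g x0}) * (\<Sum>v \<in> B. w v)"
proof -
  let ?fib = "\<lambda>v. card {x \<in> A. g x = v}"
  have "?fib (g x) < Suc (card A)" for x
    using assms(1) by (simp add: card_mono le_imp_less_Suc)
  then obtain x0 where x0: "x0 \<in> A" and max: "\<And>x. x \<in> A \<Longrightarrow> ?fib (g x) \<le> ?fib (g x0)"
    using ex_has_greatest_nat[of "\<lambda>x. x \<in> A" _ "\<lambda>x. ?fib (g x)"] assms(2) by blast
  have "(\<Sum>x \<in> {x \<in> A. g x = v}. w (g x)) = real (?fib v) * w v" for v
    using sum.cong[of "{x \<in> A. g x = v}" _ "\<lambda>x. w (g x)" "\<lambda>_. w v"] by simp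
  then have "(\<Sum>x \<in> A. w (g x)) = (\<Sum>v \<in> g ` A. real (?fib v) * w v)"
    using sum.image_gen[OF assms(1), of "\<lambda>x. w (g x)" g] by simp
  also have "\<dots> \<le> (\<Sum>v \<in> g ` A. real (?fib (g x0)) * w v)"
    using max assms(4,5) by (intro sum_mono mult_right_mono) auto
  also have "\<dots> \<le> real (?fib (g x0)) * (\<Sum>v \<in> B. w v)"
    unfolding sum_distrib_left[symmetric] using assms(3-5) by (intro mult_left_mono sum_mono2) auto
  finally show ?thesis using x0 by blast
qed

lemma sum_power_abs_le:
  fixes r :: real
  assumes "0 < r" "r < 1"
  shows "(\<Sum>m \<in> {-K..K}. r ^ nat \<bar>m\<bar>) \<le> 2 / (1 - r)"
proof -
  have half: "(\<Sum>m \<in> X. r ^ nat \<bar>m\<bar>) \<le> 1 / (1 - r)"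
    if "X \<subseteq> {-K..K}" "inj_on (\<lambda>m. nat \<bar>m\<bar>) X" for X
  proof -
    have "(\<Sum>m \<in> X. r ^ nat \<bar>m\<bar>) = (\<Sum>k \<in> (\<lambda>m. nat \<bar>m\<bar>) ` X. r ^ k)"
      using sum.reindex[OF that(2), of "\<lambda>k. r ^ k"] by simp
    also have "\<dots> < 1 / (1 - r)"
      using assms that(1) finite_subset[OF that(1)] by (intro geometric_sum_less) auto
    finally show ?thesis by simp
  qed
  have "{-K..K} = {m \<in> {-K..K}. m < 0} \<union> {m \<in> {-K..K}. 0 \<le> m}" by auto
  then have "(\<Sum>m \<in> {-K..K}. r ^ nat \<bar>m\<bar>)
      = (\<Sum>m \<in> {m \<in> {-K..K}. m < 0}. r ^ nat \<bar>m\<bar>) + (\<Sum>m \<in> {m \<in> {-K..K}. 0 \<le> m}. r ^ nat \<bar>m\<bar>)"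
    by (metis (no_types, lifting) sum.union_disjoint disjoint_iff finite_atLeastAtMost_int
        finite_subset mem_Collect_eq not_le subsetI)
  also have "\<dots> \<le> 1 / (1 - r) + 1 / (1 - r)"
    by (intro add_mono half) (auto intro: inj_onI)
  finally show ?thesis by simp
qed

lemma exp_neg_square_le: "exp (- t\<^sup>2) \<le> 3 * exp (- t :: real)"
proof -
  have "- t\<^sup>2 \<le> 1/4 - t"
    using zero_le_power2[of "t - 1/2"] by (simp add: power2_eq_square algebra_simps)
  then have "exp (- t\<^sup>2) \<le> exp (1/4) * exp (- t)"
    by (simp flip: exp_add)
  also have "exp (1/4 :: real) \<le> 3"
    using exp_le order.trans[of "exp (1/4::real)" "exp 1" 3] by simp
  finally show ?thesis by simp
qed

lemma sum_exp_neg_square_le: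
  fixes l :: real
  assumes "1 \<le> l"
  shows "(\<Sum>m \<in> {-K..K}. exp (- (real_of_int m)\<^sup>2 / l)) \<le> 12 * sqrt l"
proof -
  define u where "u = 1 / sqrt l"
  define r where "r = exp (- u)"
  have u: "0 < u" "u \<le> 1" using assms by (auto simp: u_def)
  have r: "0 < r" "r < 1" using u by (auto simp: r_def)
  have "exp (- (real_of_int m)\<^sup>2 / l) \<le> 3 * r ^ nat \<bar>m\<bar>" for m
  proof -
    have "(real_of_int m)\<^sup>2 / l = (\<bar>real_of_int m\<bar> * u)\<^sup>2"
      using assms by (simp add: u_def power_mult_distrib power_divide)
    moreover have "exp (- (\<bar>real_of_int m\<bar> * u)) = r ^ nat \<bar>m\<bar>"
      by (simp add: r_def flip: exp_of_nat_mult)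
    ultimately show ?thesis
      using exp_neg_square_le[of "\<bar>real_of_int m\<bar> * u"] by simp
  qed
  then have "(\<Sum>m \<in> {-K..K}. exp (- (real_of_int m)\<^sup>2 / l)) \<le> 3 * (\<Sum>m \<in> {-K..K}. r ^ nat \<bar>m\<bar>)"
    by (simp add: sum_distrib_left sum_mono)
  also have "\<dots> \<le> 3 * (2 / (1 - r))"
    using sum_power_abs_le[OF r, of K] by linarith
  also have "2 / (1 - r) \<le> 4 * sqrt l"
  proof -
    have "r \<le> 1 / (1 + u)"
      using exp_ge_add_one_self[of u] u by (simp add: r_def exp_minus divide_simps)
    also have "\<dots> \<le> 1 - u / 2"
      using u by (simp add: field_simps power2_eq_square mult_left_le)
    finally have "u / 2 \<le> 1 - r" by simp
    then have "2 / (1 - r) \<le> 2 / (u / 2)"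
      using u by (intro divide_left_mono) auto
    then show ?thesis
      using assms by (simp add: u_def)
  qed
  finally show ?thesis by simp
qed

lemma finite_Vars: "finite (Vars f l)"
  by (simp add: Vars_def finite_PiE)

lemma finite_Assigns: "finite (Assigns f l)"
  by (simp add: Assigns_def finite_PiE finite_Vars)

lemma card_Vars: "card (Vars f l) = l ^ f"
  by (simp add: Vars_def card_PiE)

lemma card_Assigns: "card (Assigns f l) = 2 ^ (l ^ f)"
  by (simp add: Assigns_def card_PiE finite_Vars card_Vars numeral_2_eq_2)

lemma finite_Cols: "finite (Cols f l)"
  by (simp add: Cols_def finite_PiE)

lemma card_Cols: "card (Cols f l) = f * l ^ (f - 1)"
proof -
  have "card (Cols f l) = (\<Sum>b \<in> {1..f}. card (PiE ({1..f} - {b}) (\<lambda>_. {1..l})))"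
    unfolding Cols_def by (rule card_SigmaI) (auto simp: finite_PiE)
  also have "\<dots> = (\<Sum>b \<in> {1..f}. l ^ (f - 1))"
    by (intro sum.cong) (auto simp: card_PiE)
  finally show ?thesis by simp
qed

lemma col_subset_Vars: "col f l C \<subseteq> Vars f l"
  by (auto simp: col_def)

lemma card_col_le:
  assumes "C \<in> Cols f l"
  shows "card (col f l C) \<le> l"
proof -
  have b: "fst C \<in> {1..f}" using assms by (cases C) (simp add: Cols_def)
  have "inj_on (\<lambda>x. x (fst C)) (col f l C)"
  proof (rule inj_onI)
    fix x y assume x: "x \<in> col f l C" and y: "y \<in> col f l C" and "x (fst C) = y (fst C)"
    then have "x i = y i" if "i \<in> {1..f}" for i
      using that by (cases "i = fst C") (auto simp: col_def)
    then show "x = y"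
      using x y unfolding col_def Vars_def by (blast intro: PiE_ext)
  qed
  moreover have "(\<lambda>x. x (fst C)) ` col f l C \<subseteq> {1..l}"
    using b PiE_mem[of _ "{1..f}" "\<lambda>_. {1..l}" "fst C"] by (auto simp: col_def Vars_def)
  ultimately show ?thesis
    using card_inj_on_le[of _ _ "{1..l}"] by fastforce
qed

lemma col_eq_axis_line:
  assumes "x \<in> Vars f l" "a \<in> {1..f}"
  shows "(a, restrict x ({1..f} - {a})) \<in> Cols f l"
    and "col f l (a, restrict x ({1..f} - {a})) = Vars f l \<inter> axis_line a x"
proof -
  have "restrict x ({1..f} - {a}) \<in> PiE ({1..f} - {a}) (\<lambda>_. {1..l})"
    using assms(1) by (auto simp: Vars_def restrict_PiE_iff)
  then show "(a, restrict x ({1..f} - {a})) \<in> Cols f l"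
    unfolding Cols_def using assms(2) by (rule SigmaI[rotated])
  have "(\<forall>b \<in> {1..f} - {a}. y b = x b) \<longleftrightarrow> y \<in> axis_line a x" if "y \<in> Vars f l" for y
  proof -
    have "y b = x b" if "b \<notin> {1..f}" for b
      using \<open>y \<in> Vars f l\<close> assms(1) that unfolding Vars_def by (metis PiE_arb)
    then show ?thesis unfolding axis_line_def by blast
  qed
  then show "col f l (a, restrict x ({1..f} - {a})) = Vars f l \<inter> axis_line a x"
    by (auto simp: col_def)
qed

definition col_sums :: "nat \<Rightarrow> nat \<Rightarrow> ((nat \<Rightarrow> nat) \<Rightarrow> int) \<Rightarrow> nat \<times> (nat \<Rightarrow> nat) \<Rightarrow> int" where
  "col_sums f l S = restrict (\<lambda>C. \<Sum>i \<in> col f l C. S i) (Cols f l)"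

lemma Ham_col_sums: "Ham f l M S = (\<Sum>C \<in> Cols f l. (col_sums f l S C - M C)\<^sup>2)"
  by (simp add: Ham_def col_sums_def)

lemma Ham_nonneg: "0 \<le> Ham f l M S"
  by (simp add: Ham_def sum_nonneg)

lemma Ham_col_sums_eq_0_iff:
  "Ham f l (col_sums f l S) T = 0 \<longleftrightarrow> col_sums f l T = col_sums f l S"
proof -
  have "Ham f l (col_sums f l S) T = 0 \<longleftrightarrow> (\<forall>C \<in> Cols f l. col_sums f l T C = col_sums f l S C)"
    unfolding Ham_col_sums by (subst sum_nonneg_eq_0_iff) (auto simp: finite_Cols)
  also have "\<dots> \<longleftrightarrow> col_sums f l T = col_sums f l S"
  proof
    assume "\<forall>C \<in> Cols f l. col_sums f l T C = col_sums f l S C"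
    then show "col_sums f l T = col_sums f l S"
      by (intro extensionalityI[of _ "Cols f l"]) (simp_all add: col_sums_def)
  qed simp
  finally show ?thesis .
qed

lemma abs_col_sums_le:
  assumes "S \<in> Assigns f l" "C \<in> Cols f l"
  shows "\<bar>col_sums f l S C\<bar> \<le> int l"
proof -
  have "\<bar>col_sums f l S C\<bar> \<le> (\<Sum>i \<in> col f l C. \<bar>S i\<bar>)"
    using assms(2) by (simp add: col_sums_def sum_abs)
  also have "\<dots> = int (card (col f l C))"
  proof -
    have "S i \<in> {-1, 1}" if "i \<in> col f l C" for i
      using assms(1) col_subset_Vars that unfolding Assigns_def by blast
    then have "(\<Sum>i \<in> col f l C. \<bar>S i\<bar>) = (\<Sum>i \<in> col f l C. 1)"
      by (intro sum.cong) fastforce+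
    then show ?thesis by simp
  qed
  finally show ?thesis
    using card_col_le[OF assms(2)] by linarith
qed

lemma card_diff_ge_two_pow:
  assumes S: "S \<in> Assigns f l" and T: "T \<in> Assigns f l"
    and eq: "col_sums f l T = col_sums f l S" and "T \<noteq> S"
  shows "2 ^ f \<le> card {i \<in> Vars f l. T i \<noteq> S i}"
proof -
  let ?d = "\<lambda>i. T i - S i"
  have "T i = S i" if "i \<notin> Vars f l" for i
    using S T that unfolding Assigns_def by (metis PiE_arb)
  then have supp: "{i. ?d i \<noteq> 0} = {i \<in> Vars f l. T i \<noteq> S i}" by auto
  have "2 ^ card {1..f} \<le> card {i. ?d i \<noteq> 0}"
  proof (rule card_support_ge_two_pow)
    show "finite {i. ?d i \<noteq> 0}" unfolding supp using finite_Vars by simp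
    show "{i. ?d i \<noteq> 0} \<noteq> {}"
    proof
      assume "{i. ?d i \<noteq> 0} = {}"
      then have "T = S"
        using S T unfolding supp Assigns_def by (intro PiE_ext) blast+
      with \<open>T \<noteq> S\<close> show False ..
    qed
  next
    fix a x assume a: "a \<in> {1..f}" and x: "?d x \<noteq> 0"
    define C where "C = (a, restrict x ({1..f} - {a}))"
    have "x \<in> Vars f l" using x supp by blast
    note C = col_eq_axis_line[OF this a, folded C_def]
    have "{y \<in> axis_line a x. ?d y \<noteq> 0} = {y \<in> col f l C. ?d y \<noteq> 0}"
      using supp C(2) by blast
    then have "(\<Sum>y \<in> {y \<in> axis_line a x. ?d y \<noteq> 0}. ?d y) = (\<Sum>y \<in> col f l C. ?d y)"
      using finite_subset[OF col_subset_Vars finite_Vars] by (intro sum.mono_neutral_left) auto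
    also have "\<dots> = col_sums f l T C - col_sums f l S C"
      using C(1) by (simp add: col_sums_def sum_subtractf)
    finally show "(\<Sum>y \<in> {y \<in> axis_line a x. ?d y \<noteq> 0}. ?d y) = 0"
      using eq by simp
  qed simp
  then show ?thesis unfolding supp by simp
qed

lemma global_min_col_sums_iff:
  assumes "S0 \<in> Assigns f l"
  shows "global_min f l (col_sums f l S0) S \<longleftrightarrow> S \<in> Assigns f l \<and> col_sums f l S = col_sums f l S0"
proof -
  let ?M = "col_sums f l S0"
  have "Ham f l ?M S0 = 0"
    by (simp add: Ham_col_sums_eq_0_iff)
  then have "global_min f l ?M S \<longleftrightarrow> S \<in> Assigns f l \<and> Ham f l ?M S = 0"
    using assms Ham_nonneg[of f l ?M] unfolding global_min_def by (metis order.antisym)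
  then show ?thesis
    by (simp add: Ham_col_sums_eq_0_iff)
qed

lemma global_min_imp_k_min:
  assumes S0: "S0 \<in> Assigns f l" and S: "global_min f l (col_sums f l S0) S"
  shows "k_min f l (col_sums f l S0) (2 ^ f - 1) S"
  unfolding k_min_def
proof (intro conjI ballI impI)
  let ?M = "col_sums f l S0"
  show SA: "S \<in> Assigns f l"
    using S by (simp add: global_min_def)
  fix T assume T: "T \<in> Assigns f l"
    and diff: "1 \<le> card {i \<in> Vars f l. T i \<noteq> S i} \<and> card {i \<in> Vars f l. T i \<noteq> S i} \<le> 2 ^ f - 1"
  show "Ham f l ?M S < Ham f l ?M T"
  proof (rule ccontr)
    assume "\<not> Ham f l ?M S < Ham f l ?M T"
    then have "global_min f l ?M T"
      using S T by (force simp: global_min_def)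
    then have "col_sums f l T = col_sums f l S"
      using S by (simp add: global_min_col_sums_iff[OF S0])
    moreover have "T \<noteq> S"
      using diff by (auto simp: card_gt_0_iff)
    ultimately have "2 ^ f \<le> card {i \<in> Vars f l. T i \<noteq> S i}"
      using card_diff_ge_two_pow[OF SA T] by blast
    moreover have "(0::nat) < 2 ^ f" by simp
    ultimately show False
      using diff by linarith
  qed
qed

lemma sum_square_col_sums_le:
  assumes "C \<in> Cols f l"
  shows "(\<Sum>S \<in> Assigns f l. (real_of_int (col_sums f l S C))\<^sup>2) \<le> real (card (Assigns f l)) * real l"
proof -
  have moment: "(\<Sum>S \<in> Assigns f l. (col_sums f l S C)\<^sup>2) = int (card (Assigns f l) * card (col f l C))"
    using sum_PiE_signs_square_sum[OF col_subset_Vars finite_subset[OF col_subset_Vars finite_Vars]] assms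
    by (simp add: col_sums_def Assigns_def)
  have "(\<Sum>S \<in> Assigns f l. (real_of_int (col_sums f l S C))\<^sup>2) = real (card (Assigns f l) * card (col f l C))"
    using arg_cong[where f = real_of_int, OF moment] by simp
  then show ?thesis
    using card_col_le[OF assms] by (simp add: mult_left_mono)
qed

lemma sum_gaussian_col_sums_ge:
  assumes "1 \<le> l"
  shows "real (card (Assigns f l)) * exp (- real (card (Cols f l)))
    \<le> (\<Sum>S \<in> Assigns f l. \<Prod>C \<in> Cols f l. exp (- (real_of_int (col_sums f l S C))\<^sup>2 / l))"
proof -
  let ?A = "Assigns f l" and ?Y = "\<lambda>S. \<Sum>C \<in> Cols f l. - (real_of_int (col_sums f l S C))\<^sup>2 / l"
  have "(\<Sum>S \<in> ?A. ?Y S) = - (\<Sum>C \<in> Cols f l. (\<Sum>S \<in> ?A. (real_of_int (col_sums f l S C))\<^sup>2) / l)"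
    by (subst sum.swap) (simp add: sum_negf sum_divide_distrib)
  also have "\<dots> \<ge> - (\<Sum>C \<in> Cols f l. real (card ?A))"
  proof -
    have bound: "(\<Sum>S \<in> ?A. (real_of_int (col_sums f l S C))\<^sup>2) / l \<le> real (card ?A)"
      if "C \<in> Cols f l" for C
      using sum_square_col_sums_le[OF that] assms by (simp add: divide_le_eq)
    show ?thesis
      by (rule le_imp_neg_le, rule sum_mono, rule bound)
  qed
  finally have "real (card ?A) * (- real (card (Cols f l))) \<le> (\<Sum>S \<in> ?A. ?Y S)"
    by (simp add: mult.commute)
  then have "real (card ?A) * exp (- real (card (Cols f l))) \<le> (\<Sum>S \<in> ?A. exp (?Y S))"
    by (intro card_mult_exp_le_sum_exp finite_Assigns)
  then show ?thesis
    by (simp add: exp_sum finite_Cols)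
qed

lemma exists_large_col_sums_fiber:
  assumes "1 \<le> l"
  shows "\<exists>S0 \<in> Assigns f l. 2 ^ (l ^ f) * (exp (-1) / (12 * sqrt l)) ^ (f * l ^ (f - 1))
    \<le> real (card {S \<in> Assigns f l. col_sums f l S = col_sums f l S0})"
proof -
  let ?A = "Assigns f l" and ?n = "card (Cols f l)"
  define w where "w v = (\<Prod>C \<in> Cols f l. exp (- (real_of_int (v C))\<^sup>2 / l))"
    for v :: "nat \<times> (nat \<Rightarrow> nat) \<Rightarrow> int"
  define B where "B = PiE (Cols f l) (\<lambda>_. {- int l..int l})"
  have "col_sums f l S \<in> B" if "S \<in> ?A" for S
  proof -
    have "col_sums f l S C \<in> {- int l..int l}" if "C \<in> Cols f l" for C
      using abs_col_sums_le[OF \<open>S \<in> ?A\<close> that] by (simp add: abs_le_iff)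
    then show ?thesis
      by (simp add: B_def col_sums_def restrict_PiE_iff)
  qed
  then have image: "col_sums f l ` ?A \<subseteq> B" by blast
  have nonempty: "?A \<noteq> {}"
    using card_Assigns[of f l] by auto
  have finite_B: "finite B"
    by (simp add: B_def finite_PiE finite_Cols)
  have w_nonneg: "0 \<le> w v" for v
    by (simp add: w_def prod_nonneg)
  from weighted_pigeonhole[OF finite_Assigns nonempty finite_B image w_nonneg]
  obtain S0 where S0: "S0 \<in> ?A" and pigeon:
      "(\<Sum>S \<in> ?A. w (col_sums f l S))
        \<le> real (card {S \<in> ?A. col_sums f l S = col_sums f l S0}) * (\<Sum>v \<in> B. w v)" ..
  have "(\<Sum>v \<in> B. w v) = (\<Sum>m \<in> {- int l..int l}. exp (- (real_of_int m)\<^sup>2 / l)) ^ ?n"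
    using prod_sum_PiE[OF finite_Cols, where B = "\<lambda>_. {- int l..int l}"
        and f = "\<lambda>_ m. exp (- (real_of_int m)\<^sup>2 / l)"]
    by (simp add: B_def w_def)
  also have "\<dots> \<le> (12 * sqrt l) ^ ?n"
    using assms by (intro power_mono sum_exp_neg_square_le) (auto intro: sum_nonneg)
  finally have upper: "(\<Sum>v \<in> B. w v) \<le> (12 * sqrt l) ^ ?n" .
  let ?fib = "real (card {S \<in> ?A. col_sums f l S = col_sums f l S0})"
  have "real (card ?A) * exp (- real ?n) \<le> (\<Sum>S \<in> ?A. w (col_sums f l S))"
    using sum_gaussian_col_sums_ge[OF assms] by (simp add: w_def)
  also note pigeon
  also have "?fib * (\<Sum>v \<in> B. w v) \<le> ?fib * (12 * sqrt l) ^ ?n"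
    using upper by (intro mult_left_mono) auto
  finally have key: "real (card ?A) * exp (- real ?n) \<le> ?fib * (12 * sqrt l) ^ ?n" .
  have "real (card ?A) * (exp (-1) / (12 * sqrt l)) ^ ?n
      = real (card ?A) * exp (- real ?n) / (12 * sqrt l) ^ ?n"
    by (simp add: power_divide flip: exp_of_nat_mult)
  also have "\<dots> \<le> ?fib"
    using key assms by (simp add: pos_divide_le_eq)
  finally show ?thesis
    using S0 by (auto simp: card_Assigns card_Cols)
qed

theorem mainTheorem5:
  shows "\<exists>c::real. c > 0 \<and> (\<forall>f l :: nat. 1 \<le> f \<longrightarrow> 1 \<le> l \<longrightarrow>
     (\<exists>M :: nat \<times> (nat \<Rightarrow> nat) \<Rightarrow> int.
        real (card {S. global_min f l M S}) \<ge> 2 ^ (l ^ f) * (c / (real f * sqrt (real l))) ^ (f * l ^ (f - 1)) \<and>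
        (\<forall>S. global_min f l M S \<longrightarrow> k_min f l M (2 ^ f - 1) S)))"
proof (intro exI[of _ "exp (-1) / 12"] conjI allI impI)
  fix f l :: nat assume f: "1 \<le> f" and l: "1 \<le> l"
  let ?n = "f * l ^ (f - 1)"
  obtain S0 where S0: "S0 \<in> Assigns f l" and large:
    "2 ^ (l ^ f) * (exp (-1) / (12 * sqrt l)) ^ ?n
      \<le> real (card {S \<in> Assigns f l. col_sums f l S = col_sums f l S0})"
    using exists_large_col_sums_fiber[OF l] by blast
  have "exp (-1) / 12 / (real f * sqrt l) \<le> exp (-1) / (12 * sqrt l)"
    using f l by (simp add: field_simps)
  then have "2 ^ (l ^ f) * (exp (-1) / 12 / (real f * sqrt l)) ^ ?n
      \<le> 2 ^ (l ^ f) * (exp (-1) / (12 * sqrt l)) ^ ?n"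
    by (intro mult_left_mono power_mono) auto
  also note large
  also have "{S \<in> Assigns f l. col_sums f l S = col_sums f l S0} = {S. global_min f l (col_sums f l S0) S}"
    using global_min_col_sums_iff[OF S0] by blast
  finally show "\<exists>M. 2 ^ (l ^ f) * (exp (-1) / 12 / (real f * sqrt l)) ^ ?n
        \<le> real (card {S. global_min f l M S}) \<and> (\<forall>S. global_min f l M S \<longrightarrow> k_min f l M (2 ^ f - 1) S)"
    using global_min_imp_k_min[OF S0] by blast
qed simp

end
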